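(* Let $N\ge1$ be an integer, $k>0$, $r>0$, $\alpha>0$ with $\alpha/r<\mu^*$. Let $\widetilde U^{\mathrm{eq}}=(x^{\mathrm{eq}},M_0^{\mathrm{eq}},M_1^{\mathrm{eq}},\dots)\in X_+$ be an equilibrium of the infinite system (S) below such that the corresponding equilibrium $U^{\mathrm{eq}}=(x^{\mathrm{eq}},u^{\mathrm{eq}},v^{\mathrm{eq}},w^{\mathrm{eq}},M_0^{\mathrm{eq}},\dots,M_N^{\mathrm{eq}})$ of the $(N+5)$-dimensional system $\dot U=F(U)$ is locally exponentially asymptotically stable. Then every solution $\widetilde U(t)$ of (S) that converges to $\widetilde U^{\mathrm{eq}}$ in the strong topology of $X$ as $t\to+\infty$ does so at an exponential rate, i.e. $\|\widetilde U(t)-\widetilde U^{\mathrm{eq}}\|\le Ce^{-\gamma t}$ for some $C,\gamma>0$ and all $t\ge0$.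
   Context: System (S): for $t\ge0$, $\dot M_0=r-kxM_0-M_0$, $\dot M_i=kxM_{i-1}-kxM_i-M_i$ ($i\ge1$), $\dot x=\alpha-kx\sum_{i=0}^\infty M_i+\sum_{i=N+1}^\infty iM_i$. $X$ is the Banach space of real sequences $(x,M_0,M_1,\dots)$ with norm $\|(x,M_0,M_1,\dots)\|=|x|+\sum_{i\ge0}(i+1)|M_i|<\infty$, and $X_+$ its nonnegative cone; solutions of (S) are the nonnegative solutions with values in $X_+$. To $(x,M_0,M_1,\dots)\in X_+$ corresponds $(x,u,v,w,M_0,\dots,M_N)\in\mathbb{R}^{N+5}$ with $u=\sum_{i\ge0}M_i$, $v=\sum_{i\ge N+1}iM_i$, $w=\sum_{i\ge N}M_i$. The map $F:\mathbb{R}^{N+5}\to\mathbb{R}^{N+5}$ (variables $U_1=x,U_2=u,U_3=v,U_4=w,U_{5+i}=M_i$) is $F_1=\alpha+U_3-kU_1U_2$, $F_2=r-U_2$, $F_3=-U_3+kU_1U_4+NkU_1U_{N+5}$, $F_4=-U_4+kU_1U_{N+4}$, $F_5=r-U_5-kU_1U_5$, $F_j=-U_j+kU_1U_{j-1}-kU_1U_j$ ($6\le j\le N+5$). Finally $\mu^*:=\widetilde{\mathcal F}_N(y^* )$, where $\widetilde{\mathcal F}_N(y)=\frac{y}{1-y}(1-(N+1)y^N+Ny^{N+1})$ and $y^*$ is the unique zero in $(0,1)$ of $p_N(y)=1-(N+1)^2y^N+N(2N+3)y^{N+1}-N(N+1)y^{N+2}$. *)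

theory Defs
  imports "HOL-Analysis.Analysis"
begin

text \<open>An element (x, M_0, M_1, ...) of X is represented as a pair (x, M) with
  M :: nat => real.  It lies in X iff sum (i+1)|M_i| converges.\<close>

definition inX :: "real \<Rightarrow> (nat \<Rightarrow> real) \<Rightarrow> bool" where
  "inX x M \<longleftrightarrow> summable (\<lambda>i. real (i + 1) * \<bar>M i\<bar>)"

definition inXplus :: "real \<Rightarrow> (nat \<Rightarrow> real) \<Rightarrow> bool" where
  "inXplus x M \<longleftrightarrow> inX x M \<and> x \<ge> 0 \<and> (\<forall>i. M i \<ge> 0)"

definition Xnorm :: "real \<Rightarrow> (nat \<Rightarrow> real) \<Rightarrow> real" where
  "Xnorm x M = \<bar>x\<bar> + (\<Sum>i. real (i + 1) * \<bar>M i\<bar>)"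

definition S_rhs_x :: "nat \<Rightarrow> real \<Rightarrow> real \<Rightarrow> real \<Rightarrow> (nat \<Rightarrow> real) \<Rightarrow> real" where
  "S_rhs_x N k \<alpha> x M = \<alpha> - k * x * (\<Sum>i. M i) + (\<Sum>i. (if i \<ge> N + 1 then real i * M i else 0))"

definition S_rhs_M :: "real \<Rightarrow> real \<Rightarrow> real \<Rightarrow> (nat \<Rightarrow> real) \<Rightarrow> nat \<Rightarrow> real" where
  "S_rhs_M k r x M i =
     (if i = 0 then r - k * x * M 0 - M 0
      else k * x * M (i - 1) - k * x * M i - M i)"

definition S_equilibrium :: "nat \<Rightarrow> real \<Rightarrow> real \<Rightarrow> real \<Rightarrow> real \<Rightarrow> (nat \<Rightarrow> real) \<Rightarrow> bool" where
  "S_equilibrium N k r \<alpha> x M \<longleftrightarrow>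
     inXplus x M \<and> S_rhs_x N k \<alpha> x M = 0 \<and> (\<forall>i. S_rhs_M k r x M i = 0)"

definition S_solution ::
  "nat \<Rightarrow> real \<Rightarrow> real \<Rightarrow> real \<Rightarrow> (real \<Rightarrow> real) \<Rightarrow> (real \<Rightarrow> nat \<Rightarrow> real) \<Rightarrow> bool" where
  "S_solution N k r \<alpha> x M \<longleftrightarrow>
     (\<forall>t\<ge>0. inXplus (x t) (M t)) \<and>
     (\<forall>t0\<ge>0. ((\<lambda>t. Xnorm (x t - x t0) (\<lambda>i. M t i - M t0 i)) \<longlongrightarrow> 0)
                 (at t0 within {0..})) \<and>
     (\<forall>t\<ge>0. (x has_real_derivative S_rhs_x N k \<alpha> (x t) (M t)) (at t within {0..})) \<and>
     (\<forall>t\<ge>0. \<forall>i. ((\<lambda>s. M s i) has_real_derivative S_rhs_M k r (x t) (M t) i)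
                   (at t within {0..}))"

text \<open>Vectors of R^(N+5) are functions nat => real, only the coordinates
  U_1, ..., U_(N+5) being relevant.\<close>

definition F_fin :: "nat \<Rightarrow> real \<Rightarrow> real \<Rightarrow> real \<Rightarrow> (nat \<Rightarrow> real) \<Rightarrow> nat \<Rightarrow> real" where
  "F_fin N k r \<alpha> U j =
     (if j = 1 then \<alpha> + U 3 - k * U 1 * U 2
      else if j = 2 then r - U 2
      else if j = 3 then - U 3 + k * U 1 * U 4 + real N * k * U 1 * U (N + 5)
      else if j = 4 then - U 4 + k * U 1 * U (N + 4)
      else if j = 5 then r - U 5 - k * U 1 * U 5
      else if 6 \<le> j \<and> j \<le> N + 5 then - U j + k * U 1 * U (j - 1) - k * U 1 * U j
      else 0)"

definition fin_dist :: "nat \<Rightarrow> (nat \<Rightarrow> real) \<Rightarrow> (nat \<Rightarrow> real) \<Rightarrow> real" where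
  "fin_dist N U V = (\<Sum>j=1..N+5. \<bar>U j - V j\<bar>)"

definition F_solution :: "nat \<Rightarrow> real \<Rightarrow> real \<Rightarrow> real \<Rightarrow> (real \<Rightarrow> nat \<Rightarrow> real) \<Rightarrow> bool" where
  "F_solution N k r \<alpha> U \<longleftrightarrow>
     (\<forall>t\<ge>0. \<forall>j\<in>{1..N+5}.
        ((\<lambda>s. U s j) has_real_derivative F_fin N k r \<alpha> (U t) j) (at t within {0..}))"

definition F_loc_exp_stable :: "nat \<Rightarrow> real \<Rightarrow> real \<Rightarrow> real \<Rightarrow> (nat \<Rightarrow> real) \<Rightarrow> bool" where
  "F_loc_exp_stable N k r \<alpha> Ue \<longleftrightarrow>
     (\<forall>j\<in>{1..N+5}. F_fin N k r \<alpha> Ue j = 0) \<and>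
     (\<exists>\<delta>>0. \<exists>C>0. \<exists>\<gamma>>0. \<forall>U0. fin_dist N U0 Ue < \<delta> \<longrightarrow>
        (\<exists>U. U 0 = U0 \<and> F_solution N k r \<alpha> U) \<and>
        (\<forall>U. U 0 = U0 \<and> F_solution N k r \<alpha> U \<longrightarrow>
           (\<forall>t\<ge>0. fin_dist N (U t) Ue \<le> C * exp (- \<gamma> * t) * fin_dist N U0 Ue)))"

definition reduce :: "nat \<Rightarrow> real \<Rightarrow> (nat \<Rightarrow> real) \<Rightarrow> nat \<Rightarrow> real" where
  "reduce N x M j =
     (if j = 1 then x
      else if j = 2 then (\<Sum>i. M i)
      else if j = 3 then (\<Sum>i. (if i \<ge> N + 1 then real i * M i else 0))
      else if j = 4 then (\<Sum>i. (if i \<ge> N then M i else 0))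
      else if 5 \<le> j \<and> j \<le> N + 5 then M (j - 5)
      else 0)"

definition Ftilde :: "nat \<Rightarrow> real \<Rightarrow> real" where
  "Ftilde N y = y / (1 - y) * (1 - real (N + 1) * y ^ N + real N * y ^ (N + 1))"

definition pN :: "nat \<Rightarrow> real \<Rightarrow> real" where
  "pN N y = 1 - (real N + 1)^2 * y ^ N + real N * (2 * real N + 3) * y ^ (N + 1)
            - real N * (real N + 1) * y ^ (N + 2)"

definition ystar :: "nat \<Rightarrow> real" where
  "ystar N = (THE y. 0 < y \<and> y < 1 \<and> pN N y = 0)"

definition mustar :: "nat \<Rightarrow> real" where
  "mustar N = Ftilde N (ystar N)"

end

theory Submission
  imports Defs
begin

(* The reduced variables u, v, w, M_0, ..., M_N of a solution of (S) are linear functionals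
   of (M_i) with weights bounded by i + 1, and they satisfy the closed system U' = F(U).
   Once the solution is close enough to the equilibrium in X, its reduction lies in the
   basin of exponential stability of U^eq, so x(t) converges exponentially. Then
   D_i = M_i - M_i^eq solves the linear chain
     D_i' = a D_(i-1) - (a + 1) D_i + (a - a^eq) (M_(i-1)^eq - M_i^eq),   a = k x >= 0,
   whose forcing is O(e^(-gamma t)). The integrating factor exp (int a + t) removes the
   diagonal term, and Gronwall's inequality, applied first to sum |D_i| and then to
   sum (i + 1) |D_i|, gives exponential decay in the norm of X. *)

section \<open>Weighted summability\<close>

definition wsummable :: "(nat \<Rightarrow> real) \<Rightarrow> bool" where
  "wsummable m \<longleftrightarrow> summable (\<lambda>i. real (i + 1) * \<bar>m i\<bar>)"

definition wnorm :: "(nat \<Rightarrow> real) \<Rightarrow> real" where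
  "wnorm m = (\<Sum>i. real (i + 1) * \<bar>m i\<bar>)"

lemma inX_iff_wsummable: "inX x m \<longleftrightarrow> wsummable m"
  by (simp add: inX_def wsummable_def)

lemma Xnorm_eq: "Xnorm x m = \<bar>x\<bar> + wnorm m"
  by (simp add: Xnorm_def wnorm_def)

lemma wnorm_nonneg: "wsummable m \<Longrightarrow> wnorm m \<ge> 0"
  unfolding wsummable_def wnorm_def by (rule suminf_nonneg) auto

lemma partial_sum_le_wnorm: "wsummable m \<Longrightarrow> (\<Sum>i<n. real (i + 1) * \<bar>m i\<bar>) \<le> wnorm m"
  unfolding wsummable_def wnorm_def by (rule sum_le_suminf) auto

lemma sum_abs_le_wnorm: "wsummable m \<Longrightarrow> (\<Sum>i<n. \<bar>m i\<bar>) \<le> wnorm m"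
  by (rule order_trans[OF sum_mono partial_sum_le_wnorm]) (auto simp: mult_le_cancel_right1)

lemma abs_le_wnorm:
  assumes "wsummable m"
  shows "\<bar>m j\<bar> \<le> wnorm m"
proof -
  have "\<bar>m j\<bar> \<le> real (j + 1) * \<bar>m j\<bar>"
    by (simp add: mult_le_cancel_right1)
  also have "\<dots> \<le> (\<Sum>i<Suc j. real (i + 1) * \<bar>m i\<bar>)"
    by (rule member_le_sum) auto
  also have "\<dots> \<le> wnorm m"
    using \<open>wsummable m\<close> by (rule partial_sum_le_wnorm)
  finally show ?thesis .
qed

lemma wsummable_diff:
  assumes "wsummable m" "wsummable m'"
  shows "wsummable (\<lambda>i. m i - m' i)"
  unfolding wsummable_def
proof (rule summable_comparison_test')
  show "summable (\<lambda>i. real (i + 1) * \<bar>m i\<bar> + real (i + 1) * \<bar>m' i\<bar>)"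
    using assms unfolding wsummable_def by (rule summable_add)
  show "norm (real (i + 1) * \<bar>m i - m' i\<bar>) \<le> real (i + 1) * \<bar>m i\<bar> + real (i + 1) * \<bar>m' i\<bar>" for i
    by (simp add: abs_mult distrib_left[symmetric] mult_left_mono abs_triangle_ineq4)
qed

lemma wsummable_shift:
  assumes "wsummable m"
  shows "wsummable (\<lambda>i. if i = 0 then 0 else m (i - 1))"
  unfolding wsummable_def
proof (subst summable_Suc_iff[symmetric], rule summable_comparison_test')
  show "summable (\<lambda>i. 2 * (real (i + 1) * \<bar>m i\<bar>))"
    using assms unfolding wsummable_def by (rule summable_mult)
  show "norm (real (Suc i + 1) * \<bar>if Suc i = 0 then 0 else m (Suc i - 1)\<bar>) \<le> 2 * (real (i + 1) * \<bar>m i\<bar>)" for i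
    by (simp add: algebra_simps mult_right_mono)
qed

lemma summable_abs_mult_weight:
  assumes "\<And>i. \<bar>c i\<bar> \<le> K * real (i + 1)" "wsummable m"
  shows "summable (\<lambda>i. \<bar>c i * m i\<bar>)"
proof (rule summable_comparison_test')
  show "summable (\<lambda>i. K * (real (i + 1) * \<bar>m i\<bar>))"
    using assms(2) unfolding wsummable_def by (rule summable_mult)
  show "norm \<bar>c i * m i\<bar> \<le> K * (real (i + 1) * \<bar>m i\<bar>)" for i
    using mult_right_mono[OF assms(1), of "\<bar>m i\<bar>" i] by (simp add: abs_mult mult.assoc)
qed

lemma summable_mult_weight:
  "(\<And>i. \<bar>c i\<bar> \<le> K * real (i + 1)) \<Longrightarrow> wsummable m \<Longrightarrow> summable (\<lambda>i. c i * m i)"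
  by (rule summable_rabs_cancel) (rule summable_abs_mult_weight)

lemma abs_suminf_mult_weight_le:
  assumes "\<And>i. \<bar>c i\<bar> \<le> K * real (i + 1)" "wsummable m"
  shows "\<bar>\<Sum>i. c i * m i\<bar> \<le> K * wnorm m"
proof -
  have "\<bar>\<Sum>i. c i * m i\<bar> \<le> (\<Sum>i. \<bar>c i * m i\<bar>)"
    using summable_abs_mult_weight[OF assms] by (rule summable_rabs)
  also have "\<dots> \<le> (\<Sum>i. K * (real (i + 1) * \<bar>m i\<bar>))"
  proof (rule suminf_le)
    show "\<bar>c i * m i\<bar> \<le> K * (real (i + 1) * \<bar>m i\<bar>)" for i
      using mult_right_mono[OF assms(1), of "\<bar>m i\<bar>" i] by (simp add: abs_mult mult.assoc)
  qed (use summable_abs_mult_weight[OF assms] assms(2) in \<open>auto simp: wsummable_def intro: summable_mult\<close>)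
  also have "\<dots> = K * wnorm m"
    using assms(2) unfolding wsummable_def wnorm_def by (rule suminf_mult)
  finally show ?thesis .
qed

lemma abs_suminf_mult_weight_diff_le:
  assumes "\<And>i. \<bar>c i\<bar> \<le> K * real (i + 1)" "wsummable m" "wsummable m'"
  shows "\<bar>(\<Sum>i. c i * m i) - (\<Sum>i. c i * m' i)\<bar> \<le> K * wnorm (\<lambda>i. m i - m' i)"
proof -
  have "(\<Sum>i. c i * m i) - (\<Sum>i. c i * m' i) = (\<Sum>i. c i * (m i - m' i))"
    using suminf_diff[OF summable_mult_weight[OF assms(1,2)] summable_mult_weight[OF assms(1,3)]]
    by (simp add: right_diff_distrib)
  also have "\<bar>\<dots>\<bar> \<le> K * wnorm (\<lambda>i. m i - m' i)"
    by (rule abs_suminf_mult_weight_le[OF assms(1) wsummable_diff[OF assms(2,3)]])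
  finally show ?thesis .
qed

lemma shifted_weight_bound:
  assumes "\<And>i. \<bar>c i\<bar> \<le> K * real (i + 1)"
  shows "\<bar>c (Suc i)\<bar> \<le> (2 * K) * real (i + 1)"
proof -
  have "K \<ge> 0"
    using assms[of 0] by simp
  then have "K * real (Suc i + 1) \<le> (2 * K) * real (i + 1)"
    by (simp add: algebra_simps)
  then show ?thesis
    using assms[of "Suc i"] by linarith
qed

lemma suminf_single: "(\<Sum>i. if i = j then f i else 0) = (f j :: real)"
  using sums_single by (rule sums_unique[symmetric])

section \<open>Exponential estimates for real functions\<close>

lemma has_real_derivative_nonpos_imp_le:
  fixes J :: "real \<Rightarrow> real"
  assumes "a \<le> b"
    and "\<And>s. s \<in> {a..b} \<Longrightarrow> (J has_real_derivative J' s) (at s within {a..b})"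
    and "\<And>s. s \<in> {a..b} \<Longrightarrow> J' s \<le> 0"
  shows "J b \<le> J a"
proof -
  obtain z where "z \<in> {a..b}" "J b - J a = J' z * (b - a)"
    using mvt_very_simple[OF assms(1), of J "\<lambda>s h. J' s * h"] assms(2)
    unfolding has_field_derivative_def by auto
  moreover have "J' z * (b - a) \<le> 0"
    using assms(1) assms(3)[OF \<open>z \<in> {a..b}\<close>] by (simp add: mult_nonpos_nonneg)
  ultimately show ?thesis
    by simp
qed

lemma gronwall_exp_forcing:
  fixes \<phi> a \<beta> :: "real \<Rightarrow> real"
  assumes "t \<ge> 0" "\<mu> > 0" "B \<ge> 0"
    and "continuous_on {0..t} a" "continuous_on {0..t} \<phi>" "continuous_on {0..t} \<beta>"
    and a_nonneg: "\<And>s. s \<in> {0..t} \<Longrightarrow> a s \<ge> 0"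
    and integral_ineq: "\<And>s. s \<in> {0..t} \<Longrightarrow> \<phi> s \<le> c + integral {0..s} (\<lambda>u. a u * \<phi> u + \<beta> u)"
    and forcing: "\<And>s. s \<in> {0..t} \<Longrightarrow> exp (- integral {0..s} a) * \<beta> s \<le> B * exp (\<mu> * s)"
  shows "exp (- integral {0..t} a) * \<phi> t \<le> c + B / \<mu> * exp (\<mu> * t)"
proof -
  define L where "L s = integral {0..s} a" for s
  define I where "I s = integral {0..s} (\<lambda>u. a u * \<phi> u + \<beta> u)" for s
  define J where "J s = exp (- L s) * (c + I s) - B / \<mu> * exp (\<mu> * s)" for s
  define J' where "J' s = exp (- L s) * (a s * (\<phi> s - c - I s)) + (exp (- L s) * \<beta> s - B * exp (\<mu> * s))" for s
  have "(J has_real_derivative J' s) (at s within {0..t})" if "s \<in> {0..t}" for s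
  proof -
    have "continuous_on {0..t} (\<lambda>u. a u * \<phi> u + \<beta> u)"
      using assms(4-6) by (intro continuous_intros)
    then have "(I has_real_derivative a s * \<phi> s + \<beta> s) (at s within {0..t})"
      unfolding I_def using that by (rule integral_has_real_derivative)
    moreover have "(L has_real_derivative a s) (at s within {0..t})"
      unfolding L_def using assms(4) that by (rule integral_has_real_derivative)
    ultimately have "(J has_real_derivative exp (- L s) * (- a s) * (c + I s)
        + exp (- L s) * (a s * \<phi> s + \<beta> s) - B / \<mu> * (exp (\<mu> * s) * \<mu>)) (at s within {0..t})"
      unfolding J_def by (intro derivative_eq_intros) auto
    then show ?thesis
      using assms(2) unfolding J'_def by (simp add: algebra_simps)
  qed
  moreover have "J' s \<le> 0" if "s \<in> {0..t}" for s
  proof -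
    have "a s * (\<phi> s - c - I s) \<le> 0"
      using a_nonneg[OF that] integral_ineq[OF that] unfolding I_def by (simp add: mult_nonneg_nonpos)
    then show ?thesis
      using forcing[OF that] unfolding J'_def L_def by (simp add: mult_nonneg_nonpos add_nonpos_nonpos)
  qed
  ultimately have "J t \<le> J 0"
    by (rule has_real_derivative_nonpos_imp_le[OF assms(1)])
  moreover have "J 0 = c - B / \<mu>"
    unfolding J_def L_def I_def by simp
  moreover have "exp (- L t) * \<phi> t \<le> exp (- L t) * (c + I t)"
    using integral_ineq[of t] assms(1) unfolding I_def by simp
  moreover have "B / \<mu> \<ge> 0"
    using assms(2,3) by simp
  ultimately show ?thesis
    unfolding J_def L_def I_def by linarith
qed

lemma exp_bound_extend_to_initial_segment:
  fixes f :: "real \<Rightarrow> real"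
  assumes "continuous_on {0..T} f" "\<gamma> \<ge> 0" "\<And>t. t \<ge> T \<Longrightarrow> \<bar>f t\<bar> \<le> C * exp (- \<gamma> * t)"
  shows "\<exists>C'. \<forall>t\<ge>0. \<bar>f t\<bar> \<le> C' * exp (- \<gamma> * t)"
proof -
  have "bounded (f ` {0..T})"
    by (intro compact_imp_bounded compact_continuous_image assms(1) compact_Icc)
  then obtain B where "\<forall>y \<in> f ` {0..T}. norm y \<le> B"
    unfolding bounded_iff by blast
  then have B: "\<And>s. s \<in> {0..T} \<Longrightarrow> \<bar>f s\<bar> \<le> B"
    by simp
  have "\<bar>f t\<bar> \<le> (\<bar>C\<bar> + \<bar>B\<bar> * exp (\<gamma> * T)) * exp (- \<gamma> * t)" if "t \<ge> 0" for t
  proof (cases "t \<le> T")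
    case True
    have "\<bar>f t\<bar> \<le> \<bar>B\<bar> * 1"
      using B[of t] that True by simp
    also have "\<dots> \<le> \<bar>B\<bar> * (exp (\<gamma> * T) * exp (- \<gamma> * t))"
      using True assms(2) by (intro mult_left_mono) (auto simp: mult_left_mono simp flip: exp_add)
    also have "\<dots> \<le> (\<bar>C\<bar> + \<bar>B\<bar> * exp (\<gamma> * T)) * exp (- \<gamma> * t)"
      by (simp add: algebra_simps)
    finally show ?thesis .
  next
    case False
    then have "\<bar>f t\<bar> \<le> C * exp (- \<gamma> * t)"
      by (intro assms(3)) simp
    also have "\<dots> \<le> (\<bar>C\<bar> + \<bar>B\<bar> * exp (\<gamma> * T)) * exp (- \<gamma> * t)"
      using abs_ge_self[of C] by (intro mult_right_mono) (auto intro: add_increasing2)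
    finally show ?thesis .
  qed
  then show ?thesis
    by blast
qed

section \<open>Linear chains with exponentially small forcing\<close>

lemma sum_shift_le:
  fixes f :: "nat \<Rightarrow> real"
  assumes "\<And>i. f i \<ge> 0"
  shows "(\<Sum>i<n. if i = 0 then 0 else f (i - 1)) \<le> (\<Sum>i<n. f i)"
proof -
  have "(\<Sum>i<n. if i = 0 then 0 else f (i - 1)) \<le> (\<Sum>i<Suc n. if i = 0 then 0 else f (i - 1))"
    using assms[of "n - 1"] by simp
  also have "\<dots> = (\<Sum>i<n. f i)"
    by (subst sum.lessThan_Suc_shift) simp
  finally show ?thesis .
qed

locale forced_chain =
  fixes a :: "real \<Rightarrow> real" and a_lim :: real and g :: "nat \<Rightarrow> real"
    and D :: "nat \<Rightarrow> real \<Rightarrow> real" and c \<gamma> :: real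
  assumes continuous_a: "continuous_on {0..} a"
    and a_nonneg: "\<And>s. s \<ge> 0 \<Longrightarrow> a s \<ge> 0"
    and a_exp_close: "\<And>s. s \<ge> 0 \<Longrightarrow> \<bar>a s - a_lim\<bar> \<le> c * exp (- \<gamma> * s)"
    and rate_pos: "\<gamma> > 0" and rate_less_1: "\<gamma> < 1"
    and wsummable_g: "wsummable g"
    and wsummable_D0: "wsummable (\<lambda>i. D i 0)"
    and D_deriv: "\<And>i s. s \<ge> 0 \<Longrightarrow> (D i has_real_derivative
          a s * (if i = 0 then 0 else D (i - 1) s) - (a s + 1) * D i s + (a s - a_lim) * g i)
          (at s within {0..})"
begin

definition damping :: "real \<Rightarrow> real" where
  "damping s = integral {0..s} a + s"

definition undamped :: "nat \<Rightarrow> real \<Rightarrow> real" where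
  "undamped i s = exp (damping s) * D i s"

lemma c_nonneg: "c \<ge> 0"
  using a_exp_close[of 0] by simp

lemma a_le: "s \<ge> 0 \<Longrightarrow> a s \<le> a_lim + c"
  using a_exp_close[of s] c_nonneg rate_pos mult_left_le[of "exp (- \<gamma> * s)" c] by simp

lemma continuous_on_a: "continuous_on {0..t} a"
  using continuous_a by (rule continuous_on_subset) auto

lemma damping_deriv:
  "s \<in> {0..t} \<Longrightarrow> (damping has_real_derivative a s + 1) (at s within {0..t})"
  unfolding damping_def[abs_def]
  by (rule DERIV_add[OF integral_has_real_derivative[OF continuous_on_a] DERIV_ident])

lemma continuous_on_damping: "continuous_on {0..t} damping"
  using damping_deriv by (rule DERIV_continuous_on)

text \<open>Multiplying by \<open>exp (damping s)\<close> removes the diagonal term of the chain, so that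
  the remaining coupling \<open>a s * undamped (i - 1) s\<close> has a nonnegative coefficient.\<close>

lemma undamped_deriv:
  assumes "s \<in> {0..t}"
  shows "(undamped i has_real_derivative
     a s * (if i = 0 then 0 else undamped (i - 1) s) + exp (damping s) * (a s - a_lim) * g i)
     (at s within {0..t})"
proof -
  have "(D i has_real_derivative
      a s * (if i = 0 then 0 else D (i - 1) s) - (a s + 1) * D i s + (a s - a_lim) * g i)
      (at s within {0..t})"
    using assms by (intro DERIV_subset[OF D_deriv]) auto
  from DERIV_mult[OF DERIV_chain2[OF DERIV_exp damping_deriv[OF assms]] this]
  show ?thesis
    unfolding undamped_def[abs_def] by (cases "i = 0") (simp_all add: algebra_simps)
qed

lemma continuous_on_undamped: "continuous_on {0..t} (undamped i)"
  using undamped_deriv by (rule DERIV_continuous_on)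

lemma continuous_on_abs_undamped_pred:
  "continuous_on {0..t} (\<lambda>s. if i = 0 then 0 else \<bar>undamped (i - 1) s\<bar>)"
  by (cases "i = 0") (simp_all add: continuous_on_rabs continuous_on_undamped)

lemma abs_undamped_le:
  assumes "t \<ge> 0"
  shows "\<bar>undamped i t\<bar> \<le> \<bar>D i 0\<bar> + integral {0..t} (\<lambda>s.
     a s * (if i = 0 then 0 else \<bar>undamped (i - 1) s\<bar>) + exp (damping s) * \<bar>a s - a_lim\<bar> * \<bar>g i\<bar>)"
proof -
  define u' where "u' s = a s * (if i = 0 then 0 else undamped (i - 1) s)
    + exp (damping s) * (a s - a_lim) * g i" for s
  have "(u' has_integral undamped i t - undamped i 0) {0..t}"
    using fundamental_theorem_of_calculus[OF assms, of "undamped i" u'] undamped_deriv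
    unfolding u'_def by (simp add: has_real_derivative_iff_has_vector_derivative)
  then have "integral {0..t} u' = undamped i t - D i 0"
    by (simp add: has_integral_iff undamped_def damping_def)
  moreover have "norm (integral {0..t} u') \<le> integral {0..t} (\<lambda>s.
      a s * (if i = 0 then 0 else \<bar>undamped (i - 1) s\<bar>) + exp (damping s) * \<bar>a s - a_lim\<bar> * \<bar>g i\<bar>)"
  proof (rule integral_norm_bound_integral)
    show "u' integrable_on {0..t}"
      using \<open>(u' has_integral _) _\<close> by blast
    show "(\<lambda>s. a s * (if i = 0 then 0 else \<bar>undamped (i - 1) s\<bar>)
        + exp (damping s) * \<bar>a s - a_lim\<bar> * \<bar>g i\<bar>) integrable_on {0..t}"
      by (intro integrable_continuous_interval continuous_intros continuous_on_a continuous_on_damping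
          continuous_on_abs_undamped_pred)
    show "norm (u' s) \<le> a s * (if i = 0 then 0 else \<bar>undamped (i - 1) s\<bar>)
        + exp (damping s) * \<bar>a s - a_lim\<bar> * \<bar>g i\<bar>" if "s \<in> {0..t}" for s
      using a_nonneg[of s] that unfolding u'_def
      by (auto simp: abs_mult intro!: abs_triangle_ineq[THEN order_trans])
  qed
  ultimately show ?thesis
    by simp
qed

lemma weighted_sum_undamped_le:
  assumes "t \<ge> 0" and w_nonneg: "\<And>i. w i \<ge> 0"
    and "(\<Sum>i<n. w i * \<bar>D i 0\<bar>) \<le> P" and g_bound: "(\<Sum>i<n. w i * \<bar>g i\<bar>) \<le> G"
  shows "(\<Sum>i<n. w i * \<bar>undamped i t\<bar>) \<le> P + integral {0..t} (\<lambda>s.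
     a s * (\<Sum>i<n. w (Suc i) * \<bar>undamped i s\<bar>) + exp (damping s) * \<bar>a s - a_lim\<bar> * G)"
proof -
  define b where "b i s = a s * (if i = 0 then 0 else \<bar>undamped (i - 1) s\<bar>)
    + exp (damping s) * \<bar>a s - a_lim\<bar> * \<bar>g i\<bar>" for i s
  have continuous_b: "continuous_on {0..t} (b i)" for i
    unfolding b_def
    by (intro continuous_intros continuous_on_a continuous_on_damping continuous_on_abs_undamped_pred)
  have "(\<Sum>i<n. w i * \<bar>undamped i t\<bar>) \<le> (\<Sum>i<n. w i * \<bar>D i 0\<bar> + w i * integral {0..t} (b i))"
    using abs_undamped_le[OF assms(1)] w_nonneg unfolding b_def
    by (intro sum_mono) (simp add: distrib_left[symmetric] mult_left_mono)
  also have "\<dots> = (\<Sum>i<n. w i * \<bar>D i 0\<bar>) + integral {0..t} (\<lambda>s. \<Sum>i<n. w i * b i s)"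
    by (subst integral_sum)
      (simp_all add: sum.distrib integrable_continuous_interval continuous_on_mult_left continuous_b)
  also have "\<dots> \<le> P + integral {0..t} (\<lambda>s.
     a s * (\<Sum>i<n. w (Suc i) * \<bar>undamped i s\<bar>) + exp (damping s) * \<bar>a s - a_lim\<bar> * G)"
  proof (intro add_mono integral_le)
    show "(\<lambda>s. \<Sum>i<n. w i * b i s) integrable_on {0..t}"
      by (intro integrable_continuous_interval continuous_intros continuous_b)
    show "(\<lambda>s. a s * (\<Sum>i<n. w (Suc i) * \<bar>undamped i s\<bar>)
        + exp (damping s) * \<bar>a s - a_lim\<bar> * G) integrable_on {0..t}"
      by (intro integrable_continuous_interval continuous_intros continuous_on_a
          continuous_on_damping continuous_on_undamped)
    fix s assume "s \<in> {0..t}"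
    have "(\<Sum>i<n. w i * b i s) = a s * (\<Sum>i<n. if i = 0 then 0 else w (Suc (i - 1)) * \<bar>undamped (i - 1) s\<bar>)
        + exp (damping s) * \<bar>a s - a_lim\<bar> * (\<Sum>i<n. w i * \<bar>g i\<bar>)"
      unfolding b_def sum_distrib_left sum.distrib[symmetric]
      by (intro sum.cong) (auto simp: algebra_simps)
    also have "\<dots> \<le> a s * (\<Sum>i<n. w (Suc i) * \<bar>undamped i s\<bar>) + exp (damping s) * \<bar>a s - a_lim\<bar> * G"
      using a_nonneg[of s] \<open>s \<in> {0..t}\<close> g_bound w_nonneg
      by (intro add_mono mult_left_mono sum_shift_le) (auto intro: mult_nonneg_nonneg)
    finally show "(\<Sum>i<n. w i * b i s) \<le> a s * (\<Sum>i<n. w (Suc i) * \<bar>undamped i s\<bar>)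
        + exp (damping s) * \<bar>a s - a_lim\<bar> * G" .
  qed fact
  finally show ?thesis .
qed

lemma damped_forcing_le:
  assumes "s \<ge> 0" "G \<ge> 0"
  shows "exp (- integral {0..s} a) * (exp (damping s) * \<bar>a s - a_lim\<bar> * G) \<le> c * G * exp ((1 - \<gamma>) * s)"
proof -
  have "exp (- integral {0..s} a) * (exp (damping s) * \<bar>a s - a_lim\<bar> * G) = exp s * \<bar>a s - a_lim\<bar> * G"
    by (simp add: damping_def exp_add exp_minus field_simps)
  also have "\<dots> \<le> exp s * (c * exp (- \<gamma> * s)) * G"
    using a_exp_close[OF assms(1)] assms(2) by (intro mult_right_mono mult_left_mono) auto
  also have "\<dots> = c * G * exp ((1 - \<gamma>) * s)"
    by (simp add: algebra_simps flip: exp_add)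
  finally show ?thesis .
qed

lemma sum_abs_undamped_le:
  assumes "t \<ge> 0"
  shows "exp (- integral {0..t} a) * (\<Sum>i<n. \<bar>undamped i t\<bar>)
    \<le> wnorm (\<lambda>i. D i 0) + c * wnorm g / (1 - \<gamma>) * exp ((1 - \<gamma>) * t)"
proof (rule gronwall_exp_forcing[where \<beta> = "\<lambda>s. exp (damping s) * \<bar>a s - a_lim\<bar> * wnorm g"])
  show "s \<in> {0..t} \<Longrightarrow> (\<Sum>i<n. \<bar>undamped i s\<bar>) \<le> wnorm (\<lambda>i. D i 0)
      + integral {0..s} (\<lambda>u. a u * (\<Sum>i<n. \<bar>undamped i u\<bar>) + exp (damping u) * \<bar>a u - a_lim\<bar> * wnorm g)" for s
    using weighted_sum_undamped_le[of s "\<lambda>_. 1" n "wnorm (\<lambda>i. D i 0)" "wnorm g"]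
      sum_abs_le_wnorm[OF wsummable_D0] sum_abs_le_wnorm[OF wsummable_g] by simp
  show "s \<in> {0..t} \<Longrightarrow> exp (- integral {0..s} a) * (exp (damping s) * \<bar>a s - a_lim\<bar> * wnorm g)
      \<le> c * wnorm g * exp ((1 - \<gamma>) * s)" for s
    using wnorm_nonneg[OF wsummable_g] by (intro damped_forcing_le) auto
  show "continuous_on {0..t} (\<lambda>s. \<Sum>i<n. \<bar>undamped i s\<bar>)"
    by (intro continuous_intros continuous_on_undamped)
  show "continuous_on {0..t} (\<lambda>s. exp (damping s) * \<bar>a s - a_lim\<bar> * wnorm g)"
    by (intro continuous_intros continuous_on_damping continuous_on_a)
qed (use assms rate_less_1 c_nonneg wnorm_nonneg[OF wsummable_g] a_nonneg continuous_on_a in auto)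

lemma damped_coupling_le:
  assumes "s \<ge> 0"
  shows "exp (- integral {0..s} a) * (a s * (\<Sum>i<n. \<bar>undamped i s\<bar>) + exp (damping s) * \<bar>a s - a_lim\<bar> * wnorm g)
    \<le> ((a_lim + c) * (wnorm (\<lambda>i. D i 0) + c * wnorm g / (1 - \<gamma>)) + c * wnorm g) * exp ((1 - \<gamma>) * s)"
proof -
  define bound where "bound = (wnorm (\<lambda>i. D i 0) + c * wnorm g / (1 - \<gamma>)) * exp ((1 - \<gamma>) * s)"
  have "exp (- integral {0..s} a) * (\<Sum>i<n. \<bar>undamped i s\<bar>)
      \<le> wnorm (\<lambda>i. D i 0) + c * wnorm g / (1 - \<gamma>) * exp ((1 - \<gamma>) * s)"
    using assms by (rule sum_abs_undamped_le)
  also have "\<dots> \<le> bound"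
    unfolding bound_def using wnorm_nonneg[OF wsummable_D0] assms rate_less_1 mult_left_le_one_le[of s \<gamma>] rate_pos
    by (simp add: algebra_simps mult_le_cancel_left1)
  finally have "a s * (exp (- integral {0..s} a) * (\<Sum>i<n. \<bar>undamped i s\<bar>)) \<le> (a_lim + c) * bound"
    using assms a_le[of s] a_nonneg[of s] by (intro mult_mono) auto
  moreover have "exp (- integral {0..s} a) * (exp (damping s) * \<bar>a s - a_lim\<bar> * wnorm g)
      \<le> c * wnorm g * exp ((1 - \<gamma>) * s)"
    using assms wnorm_nonneg[OF wsummable_g] by (rule damped_forcing_le)
  ultimately show ?thesis
    unfolding bound_def by (simp add: algebra_simps)
qed

lemma weighted_sum_abs_undamped_le:
  obtains B where "\<And>t n. t \<ge> 0 \<Longrightarrow> exp (- integral {0..t} a) * (\<Sum>i<n. real (i + 1) * \<bar>undamped i t\<bar>)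
    \<le> wnorm (\<lambda>i. D i 0) + B * exp ((1 - \<gamma>) * t)"
proof -
  define P where "P = wnorm (\<lambda>i. D i 0)"
  define G where "G = wnorm g"
  define B where "B = (a_lim + c) * (P + c * G / (1 - \<gamma>)) + c * G"
  have "a_lim + c \<ge> 0"
    using a_le[of 0] a_nonneg[of 0] by simp
  then have "B \<ge> 0"
    unfolding B_def P_def G_def using wsummable_D0 wsummable_g c_nonneg rate_less_1
    by (simp add: wnorm_nonneg)
  define \<Phi> where "\<Phi> n s = (\<Sum>i<n. \<bar>undamped i s\<bar>)" for n s
  define W where "W n s = (\<Sum>i<n. real (i + 1) * \<bar>undamped i s\<bar>)" for n s
  have "exp (- integral {0..t} a) * W n t \<le> P + B / (1 - \<gamma>) * exp ((1 - \<gamma>) * t)"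
    if "t \<ge> 0" for t n
  proof (rule gronwall_exp_forcing[where \<beta> = "\<lambda>s. a s * \<Phi> n s + exp (damping s) * \<bar>a s - a_lim\<bar> * G"])
    fix s assume s: "s \<in> {0..t}"
    have "W n s \<le> P + integral {0..s} (\<lambda>u. a u * (\<Sum>i<n. real (Suc i + 1) * \<bar>undamped i u\<bar>)
        + exp (damping u) * \<bar>a u - a_lim\<bar> * G)"
      unfolding W_def P_def G_def using s wsummable_D0 wsummable_g
      by (intro weighted_sum_undamped_le partial_sum_le_wnorm) auto
    also have "(\<lambda>u. a u * (\<Sum>i<n. real (Suc i + 1) * \<bar>undamped i u\<bar>)
        + exp (damping u) * \<bar>a u - a_lim\<bar> * G)
      = (\<lambda>u. a u * W n u + (a u * \<Phi> n u + exp (damping u) * \<bar>a u - a_lim\<bar> * G))"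
      unfolding W_def \<Phi>_def by (simp add: algebra_simps sum.distrib sum_distrib_left)
    finally show "W n s \<le> P + integral {0..s} (\<lambda>u. a u * W n u
        + (a u * \<Phi> n u + exp (damping u) * \<bar>a u - a_lim\<bar> * G))" .
    show "exp (- integral {0..s} a) * (a s * \<Phi> n s + exp (damping s) * \<bar>a s - a_lim\<bar> * G)
        \<le> B * exp ((1 - \<gamma>) * s)"
      unfolding \<Phi>_def B_def P_def G_def using s by (intro damped_coupling_le) auto
  next
    show "continuous_on {0..t} (W n)"
      unfolding W_def by (intro continuous_intros continuous_on_undamped)
    show "continuous_on {0..t} (\<lambda>s. a s * \<Phi> n s + exp (damping s) * \<bar>a s - a_lim\<bar> * G)"
      unfolding \<Phi>_def by (intro continuous_intros continuous_on_a continuous_on_damping continuous_on_undamped)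
  qed (use that rate_less_1 \<open>B \<ge> 0\<close> a_nonneg continuous_on_a in auto)
  then show ?thesis
    using that[of "B / (1 - \<gamma>)"] unfolding P_def W_def by blast
qed

lemma weighted_sum_exp_decay:
  obtains C where "\<And>t n. t \<ge> 0 \<Longrightarrow> (\<Sum>i<n. real (i + 1) * \<bar>D i t\<bar>) \<le> C * exp (- \<gamma> * t)"
proof -
  obtain B where B: "\<And>t n. t \<ge> 0 \<Longrightarrow> exp (- integral {0..t} a) * (\<Sum>i<n. real (i + 1) * \<bar>undamped i t\<bar>)
    \<le> wnorm (\<lambda>i. D i 0) + B * exp ((1 - \<gamma>) * t)"
    using weighted_sum_abs_undamped_le by blast
  have "(\<Sum>i<n. real (i + 1) * \<bar>D i t\<bar>) \<le> (wnorm (\<lambda>i. D i 0) + B) * exp (- \<gamma> * t)"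
    if "t \<ge> 0" for t n
  proof -
    have "(\<Sum>i<n. real (i + 1) * \<bar>D i t\<bar>)
        = exp (- t) * (exp (- integral {0..t} a) * (\<Sum>i<n. real (i + 1) * \<bar>undamped i t\<bar>))"
      unfolding undamped_def damping_def sum_distrib_left
      by (intro sum.cong) (auto simp: abs_mult exp_add exp_minus field_simps)
    also have "\<dots> \<le> exp (- t) * (wnorm (\<lambda>i. D i 0) + B * exp ((1 - \<gamma>) * t))"
      using B[OF that] by simp
    also have "\<dots> = exp (- t) * wnorm (\<lambda>i. D i 0) + B * exp (- \<gamma> * t)"
      by (simp add: algebra_simps flip: exp_add)
    also have "\<dots> \<le> (wnorm (\<lambda>i. D i 0) + B) * exp (- \<gamma> * t)"
    proof -
      have "exp (- t) \<le> exp (- \<gamma> * t)"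
        using that rate_less_1 mult_left_le_one_le[of t \<gamma>] rate_pos by simp
      then have "exp (- t) * wnorm (\<lambda>i. D i 0) \<le> exp (- \<gamma> * t) * wnorm (\<lambda>i. D i 0)"
        using wnorm_nonneg[OF wsummable_D0] by (rule mult_right_mono)
      then show ?thesis
        by (simp add: algebra_simps)
    qed
    finally show ?thesis .
  qed
  then show ?thesis
    using that by blast
qed

end

section \<open>The moment equations\<close>

lemma suminf_S_rhs_M_weighted:
  assumes "wsummable m" and c_bound: "\<And>i. \<bar>c i\<bar> \<le> K * real (i + 1)"
  shows "summable (\<lambda>i. c i * S_rhs_M k r \<xi> m i)"
    and "(\<Sum>i. c i * S_rhs_M k r \<xi> m i)
      = c 0 * r + k * \<xi> * (\<Sum>i. c (Suc i) * m i) - (k * \<xi> + 1) * (\<Sum>i. c i * m i)"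
proof -
  have shifted: "summable (\<lambda>i. c (Suc i) * m i)"
    using shifted_weight_bound[OF c_bound] \<open>wsummable m\<close> by (rule summable_mult_weight)
  have plain: "summable (\<lambda>i. c i * m i)"
    using c_bound \<open>wsummable m\<close> by (rule summable_mult_weight)
  define T where "T i = c i * S_rhs_M k r \<xi> m i" for i
  have T_Suc: "T (Suc i) = k * \<xi> * (c (Suc i) * m i) - (k * \<xi> + 1) * (c (Suc i) * m (Suc i))" for i
    by (simp add: T_def S_rhs_M_def algebra_simps)
  have summable_T_Suc: "summable (\<lambda>i. T (Suc i))"
    unfolding T_Suc using shifted summable_Suc_iff[THEN iffD2, OF plain]
    by (intro summable_diff summable_mult)
  then show "summable (\<lambda>i. c i * S_rhs_M k r \<xi> m i)"
    unfolding T_def[symmetric] summable_Suc_iff .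
  have "(\<Sum>i. T (Suc i))
      = (\<Sum>i. k * \<xi> * (c (Suc i) * m i)) - (\<Sum>i. (k * \<xi> + 1) * (c (Suc i) * m (Suc i)))"
    unfolding T_Suc using shifted summable_Suc_iff[THEN iffD2, OF plain]
    by (simp add: suminf_diff summable_mult)
  also have "\<dots> = k * \<xi> * (\<Sum>i. c (Suc i) * m i) - (k * \<xi> + 1) * ((\<Sum>i. c i * m i) - c 0 * m 0)"
    using shifted summable_Suc_iff[THEN iffD2, OF plain]
    by (simp add: suminf_mult suminf_split_head[OF plain])
  finally have "(\<Sum>i. T (Suc i))
      = k * \<xi> * (\<Sum>i. c (Suc i) * m i) - (k * \<xi> + 1) * ((\<Sum>i. c i * m i) - c 0 * m 0)" .
  moreover have "(\<Sum>i. T (Suc i)) = (\<Sum>i. T i) - T 0"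
    using summable_T_Suc unfolding summable_Suc_iff by (rule suminf_split_head)
  ultimately show "(\<Sum>i. c i * S_rhs_M k r \<xi> m i)
      = c 0 * r + k * \<xi> * (\<Sum>i. c (Suc i) * m i) - (k * \<xi> + 1) * (\<Sum>i. c i * m i)"
    unfolding T_def by (simp add: S_rhs_M_def algebra_simps)
qed

lemma abs_suminf_S_rhs_M_weighted_le:
  assumes "wsummable m" and c_bound: "\<And>i. \<bar>c i\<bar> \<le> K * real (i + 1)"
  shows "\<bar>\<Sum>i. c i * S_rhs_M k r \<xi> m i\<bar> \<le> K * (\<bar>r\<bar> + (2 * \<bar>k * \<xi>\<bar> + \<bar>k * \<xi> + 1\<bar>) * wnorm m)"
proof -
  have "\<bar>c 0 * r\<bar> \<le> K * \<bar>r\<bar>"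
    using c_bound[of 0] by (simp add: abs_mult mult_right_mono)
  moreover have "\<bar>k * \<xi> * (\<Sum>i. c (Suc i) * m i)\<bar> \<le> \<bar>k * \<xi>\<bar> * (2 * K * wnorm m)"
    unfolding abs_mult[of "k * \<xi>"]
    by (intro mult_left_mono abs_suminf_mult_weight_le shifted_weight_bound c_bound assms(1)) simp
  moreover have "\<bar>(k * \<xi> + 1) * (\<Sum>i. c i * m i)\<bar> \<le> \<bar>k * \<xi> + 1\<bar> * (K * wnorm m)"
    unfolding abs_mult[of "k * \<xi> + 1"]
    by (intro mult_left_mono abs_suminf_mult_weight_le c_bound assms(1)) simp
  ultimately have "\<bar>c 0 * r\<bar> + \<bar>k * \<xi> * (\<Sum>i. c (Suc i) * m i)\<bar> + \<bar>(k * \<xi> + 1) * (\<Sum>i. c i * m i)\<bar>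
      \<le> K * (\<bar>r\<bar> + (2 * \<bar>k * \<xi>\<bar> + \<bar>k * \<xi> + 1\<bar>) * wnorm m)"
    by (simp add: algebra_simps)
  then show ?thesis
    unfolding suminf_S_rhs_M_weighted(2)[OF assms] by arith
qed

lemma abs_partial_sum_S_rhs_M_weighted_le:
  assumes "wsummable m" and c_bound: "\<And>i. \<bar>c i\<bar> \<le> K * real (i + 1)"
  shows "\<bar>\<Sum>i<n. c i * S_rhs_M k r \<xi> m i\<bar> \<le> K * (\<bar>r\<bar> + (2 * \<bar>k * \<xi>\<bar> + \<bar>k * \<xi> + 1\<bar>) * wnorm m)"
proof -
  define d where "d i = (if i < n then c i else 0)" for i
  have "K \<ge> 0"
    using c_bound[of 0] by simp
  then have d_bound: "\<bar>d i\<bar> \<le> K * real (i + 1)" for i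
    using c_bound[of i] by (simp add: d_def)
  have "(\<Sum>i<n. c i * S_rhs_M k r \<xi> m i) = (\<Sum>i. d i * S_rhs_M k r \<xi> m i)"
    by (subst suminf_finite[of "{..<n}"]) (auto simp: d_def)
  then show ?thesis
    using abs_suminf_S_rhs_M_weighted_le[OF assms(1) d_bound] by simp
qed

lemma reduce_as_moments:
  shows "reduce N \<xi> m (Suc 0) = \<xi>"
    and "reduce N \<xi> m 2 = (\<Sum>i. 1 * m i)"
    and "reduce N \<xi> m 3 = (\<Sum>i. (if N + 1 \<le> i then real i else 0) * m i)"
    and "reduce N \<xi> m 4 = (\<Sum>i. (if N \<le> i then 1 else 0) * m i)"
    and "5 \<le> j \<Longrightarrow> j \<le> N + 5 \<Longrightarrow> reduce N \<xi> m j = m (j - 5)"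
  by (auto simp: reduce_def intro!: suminf_cong)

lemma suminf_shifted_v_weight:
  assumes "wsummable m"
  shows "(\<Sum>i. (if N + 1 \<le> Suc i then real (Suc i) else 0) * m i)
    = reduce N \<xi> m 4 + (real N * m N + reduce N \<xi> m 3)"
proof -
  have "(\<Sum>i. (if N + 1 \<le> Suc i then real (Suc i) else 0) * m i)
      = (\<Sum>i. (if N \<le> i then 1 else 0) * m i + ((if i = N then real i * m i else 0)
          + (if N + 1 \<le> i then real i else 0) * m i))"
    by (intro suminf_cong) (auto simp: algebra_simps)
  also have "\<dots> = (\<Sum>i. (if N \<le> i then 1 else 0) * m i) + ((\<Sum>i. if i = N then real i * m i else 0)
      + (\<Sum>i. (if N + 1 \<le> i then real i else 0) * m i))"
    using summable_mult_weight[where K = 1, OF _ assms] by (simp add: suminf_add summable_add)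
  also have "\<dots> = reduce N \<xi> m 4 + (real N * m N + reduce N \<xi> m 3)"
    by (simp add: reduce_as_moments suminf_single)
  finally show ?thesis .
qed

lemma suminf_shifted_w_weight:
  assumes "N \<ge> 1" "wsummable m"
  shows "(\<Sum>i. (if N \<le> Suc i then 1 else 0) * m i) = m (N - 1) + reduce N \<xi> m 4"
proof -
  have "(\<Sum>i. (if N \<le> Suc i then 1 else 0) * m i)
      = (\<Sum>i. (if i = N - 1 then m i else 0) + (if N \<le> i then 1 else 0) * m i)"
    using assms(1) by (intro suminf_cong) auto
  also have "\<dots> = (\<Sum>i. if i = N - 1 then m i else 0) + (\<Sum>i. (if N \<le> i then 1 else 0) * m i)"
    using summable_mult_weight[where K = 1, OF _ assms(2)] by (simp add: suminf_add)
  also have "\<dots> = m (N - 1) + reduce N \<xi> m 4"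
    by (simp add: reduce_as_moments suminf_single)
  finally show ?thesis .
qed

lemma suminf_S_rhs_M_reduce:
  assumes "N \<ge> 1" "wsummable m"
  shows "(\<Sum>i. 1 * S_rhs_M k r \<xi> m i) = F_fin N k r \<alpha> (reduce N \<xi> m) 2"
    and "(\<Sum>i. (if N + 1 \<le> i then real i else 0) * S_rhs_M k r \<xi> m i) = F_fin N k r \<alpha> (reduce N \<xi> m) 3"
    and "(\<Sum>i. (if N \<le> i then 1 else 0) * S_rhs_M k r \<xi> m i) = F_fin N k r \<alpha> (reduce N \<xi> m) 4"
proof -
  have bound_one: "\<bar>1\<bar> \<le> 1 * real (i + 1)"
    and bound_v: "\<bar>if N + 1 \<le> i then real i else 0\<bar> \<le> 1 * real (i + 1)"
    and bound_w: "\<bar>if N \<le> i then 1 else 0\<bar> \<le> 1 * real (i + 1)" for i :: nat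
    by simp_all
  show "(\<Sum>i. 1 * S_rhs_M k r \<xi> m i) = F_fin N k r \<alpha> (reduce N \<xi> m) 2"
    unfolding suminf_S_rhs_M_weighted(2)[OF assms(2) bound_one]
    by (simp add: F_fin_def reduce_as_moments algebra_simps)
  show "(\<Sum>i. (if N + 1 \<le> i then real i else 0) * S_rhs_M k r \<xi> m i) = F_fin N k r \<alpha> (reduce N \<xi> m) 3"
    unfolding suminf_S_rhs_M_weighted(2)[OF assms(2) bound_v] using suminf_shifted_v_weight[OF assms(2)]
    by (simp add: F_fin_def reduce_as_moments(1,3,4) reduce_as_moments(5)[of "N + 5"] algebra_simps)
  show "(\<Sum>i. (if N \<le> i then 1 else 0) * S_rhs_M k r \<xi> m i) = F_fin N k r \<alpha> (reduce N \<xi> m) 4"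
    unfolding suminf_S_rhs_M_weighted(2)[OF assms(2) bound_w]
    using assms(1) reduce_as_moments(5)[of "N + 4" N \<xi> m] suminf_shifted_w_weight[OF assms]
    by (simp add: F_fin_def reduce_as_moments(1,4) algebra_simps)
qed

lemma abs_reduce_diff_le:
  assumes "wsummable m" "wsummable m'" "j \<in> {1..N + 5}"
  shows "\<bar>reduce N \<xi> m j - reduce N \<xi>' m' j\<bar> \<le> Xnorm (\<xi> - \<xi>') (\<lambda>i. m i - m' i)"
proof -
  have wnorm_le: "wnorm (\<lambda>i. m i - m' i) \<le> Xnorm (\<xi> - \<xi>') (\<lambda>i. m i - m' i)"
    by (simp add: Xnorm_eq)
  have moment_le: "\<bar>(\<Sum>i. c i * m i) - (\<Sum>i. c i * m' i)\<bar> \<le> Xnorm (\<xi> - \<xi>') (\<lambda>i. m i - m' i)"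
    if "\<And>i. \<bar>c i\<bar> \<le> 1 * real (i + 1)" for c
    using abs_suminf_mult_weight_diff_le[OF that assms(1,2)] wnorm_le by simp
  consider "j = 1" | "j = 2" | "j = 3" | "j = 4" | "5 \<le> j" "j \<le> N + 5"
    using assms(3) by force
  then show ?thesis
  proof cases
    case 1
    then show ?thesis
      using wnorm_nonneg[OF wsummable_diff[OF assms(1,2)]] by (simp add: reduce_as_moments Xnorm_eq)
  next
    case 2
    then show ?thesis
      using moment_le[of "\<lambda>_. 1"] by (simp add: reduce_as_moments)
  next
    case 3
    then show ?thesis
      by (simp add: reduce_as_moments moment_le)
  next
    case 4
    then show ?thesis
      by (simp add: reduce_as_moments moment_le)
  next
    case 5
    then show ?thesis
      using abs_le_wnorm[OF wsummable_diff[OF assms(1,2)], of "j - 5"] wnorm_le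
      by (simp add: reduce_as_moments)
  qed
qed

lemma fin_dist_reduce_le:
  assumes "wsummable m" "wsummable m'"
  shows "fin_dist N (reduce N \<xi> m) (reduce N \<xi>' m') \<le> real (N + 5) * Xnorm (\<xi> - \<xi>') (\<lambda>i. m i - m' i)"
proof -
  have "fin_dist N (reduce N \<xi> m) (reduce N \<xi>' m') \<le> of_nat (card {1..N + 5}) * Xnorm (\<xi> - \<xi>') (\<lambda>i. m i - m' i)"
    unfolding fin_dist_def by (rule sum_bounded_above) (rule abs_reduce_diff_le[OF assms])
  then show ?thesis
    by (simp add: add.commute)
qed

lemma abs_diff_le_fin_dist_reduce: "\<bar>\<xi> - \<xi>'\<bar> \<le> fin_dist N (reduce N \<xi> m) (reduce N \<xi>' m')"
proof -
  have "\<bar>reduce N \<xi> m 1 - reduce N \<xi>' m' 1\<bar> \<le> fin_dist N (reduce N \<xi> m) (reduce N \<xi>' m')"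
    unfolding fin_dist_def by (rule member_le_sum) auto
  then show ?thesis
    by (simp add: reduce_as_moments)
qed

section \<open>Solutions of (S)\<close>

locale S_trajectory =
  fixes N :: nat and k r \<alpha> :: real and x :: "real \<Rightarrow> real" and M :: "real \<Rightarrow> nat \<Rightarrow> real"
  assumes solution: "S_solution N k r \<alpha> x M"
begin

lemma x_nonneg: "s \<ge> 0 \<Longrightarrow> x s \<ge> 0"
  and M_nonneg: "s \<ge> 0 \<Longrightarrow> M s i \<ge> 0"
  and wsummable_M: "s \<ge> 0 \<Longrightarrow> wsummable (M s)"
  and Xnorm_continuous: "t \<ge> 0 \<Longrightarrow> ((\<lambda>s. Xnorm (x s - x t) (\<lambda>i. M s i - M t i)) \<longlongrightarrow> 0) (at t within {0..})"
  and x_deriv: "t \<ge> 0 \<Longrightarrow> (x has_real_derivative S_rhs_x N k \<alpha> (x t) (M t)) (at t within {0..})"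
  and M_deriv: "t \<ge> 0 \<Longrightarrow> ((\<lambda>s. M s i) has_real_derivative S_rhs_M k r (x t) (M t) i) (at t within {0..})"
  using solution unfolding S_solution_def inXplus_def inX_iff_wsummable by auto

lemma continuous_on_x: "continuous_on {0..} x"
  using x_deriv by (rule DERIV_continuous_on) simp

lemma M_wnorm_continuous:
  assumes "t \<ge> 0"
  shows "((\<lambda>s. wnorm (\<lambda>i. M s i - M t i)) \<longlongrightarrow> 0) (at t within {0..})"
proof -
  have "((\<lambda>s. \<bar>x s - x t\<bar>) \<longlongrightarrow> \<bar>x t - x t\<bar>) (at t within {0..})"
    using continuous_on_x assms unfolding continuous_on_def by (intro tendsto_intros) auto
  from tendsto_diff[OF Xnorm_continuous[OF assms] this] show ?thesis
    by (simp add: Xnorm_eq)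
qed

lemma continuous_on_moment:
  assumes "\<And>i. \<bar>c i\<bar> \<le> K * real (i + 1)"
  shows "continuous_on {0..} (\<lambda>s. \<Sum>i. c i * M s i)"
  unfolding continuous_on_def
proof (intro ballI)
  fix t :: real assume "t \<in> {0..}"
  have "eventually (\<lambda>s. norm ((\<Sum>i. c i * M s i) - (\<Sum>i. c i * M t i))
      \<le> K * wnorm (\<lambda>i. M s i - M t i)) (at t within {0..})"
    unfolding eventually_at_filter using \<open>t \<in> {0..}\<close>
    by (intro always_eventually) (auto intro!: abs_suminf_mult_weight_diff_le assms wsummable_M)
  moreover have "((\<lambda>s. K * wnorm (\<lambda>i. M s i - M t i)) \<longlongrightarrow> 0) (at t within {0..})"
    using tendsto_mult_right_zero[OF M_wnorm_continuous] \<open>t \<in> {0..}\<close> by simp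
  ultimately show "((\<lambda>s. \<Sum>i. c i * M s i) \<longlongrightarrow> (\<Sum>i. c i * M t i)) (at t within {0..})"
    by (subst LIM_zero_iff[symmetric]) (rule Lim_null_comparison)
qed

lemma continuous_on_wnorm_M: "continuous_on {0..} (\<lambda>s. wnorm (M s))"
proof -
  have "continuous_on {0..} (\<lambda>s. \<Sum>i. real (i + 1) * M s i)"
    by (rule continuous_on_moment[where K = 1]) simp
  then show ?thesis
    by (rule continuous_on_cong[THEN iffD1, rotated 2]) (auto simp: wnorm_def M_nonneg)
qed

text \<open>Sum and integral are exchanged by dominated convergence; the partial sums are dominated
  by means of \<open>abs_partial_sum_S_rhs_M_weighted_le\<close>.\<close>

lemma moment_increment_has_integral:
  assumes c_bound: "\<And>i. \<bar>c i\<bar> \<le> K * real (i + 1)" and "t \<ge> 0"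
  shows "((\<lambda>s. \<Sum>i. c i * S_rhs_M k r (x s) (M s) i) has_integral
           (\<Sum>i. c i * M t i) - (\<Sum>i. c i * M 0 i)) {0..t}"
proof -
  define R where "R s i = S_rhs_M k r (x s) (M s) i" for s i
  have "((\<lambda>s. R s i) has_integral M t i - M 0 i) {0..t}" for i
    unfolding R_def using \<open>t \<ge> 0\<close>
    by (intro fundamental_theorem_of_calculus)
      (auto simp flip: has_real_derivative_iff_has_vector_derivative intro!: DERIV_subset[OF M_deriv])
  then have partial_sums: "((\<lambda>s. \<Sum>i<n. c i * R s i) has_integral (\<Sum>i<n. c i * (M t i - M 0 i))) {0..t}" for n
    by (intro has_integral_sum has_integral_mult_right) auto
  define h where "h s = K * (\<bar>r\<bar> + (2 * \<bar>k * x s\<bar> + \<bar>k * x s + 1\<bar>) * wnorm (M s))" for s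
  have "((\<lambda>s. \<Sum>i. c i * R s i) has_integral (\<Sum>i. c i * (M t i - M 0 i))) {0..t}"
  proof (rule has_integral_dominated_convergence[OF partial_sums])
    show "h integrable_on {0..t}"
      unfolding h_def
      by (intro integrable_continuous_interval continuous_intros continuous_on_subset[OF continuous_on_x]
          continuous_on_subset[OF continuous_on_wnorm_M]) auto
    show "\<forall>s\<in>{0..t}. norm (\<Sum>i<n. c i * R s i) \<le> h s" for n
      unfolding R_def h_def by (auto intro!: abs_partial_sum_S_rhs_M_weighted_le wsummable_M c_bound)
    show "\<forall>s\<in>{0..t}. (\<lambda>n. \<Sum>i<n. c i * R s i) \<longlonglongrightarrow> (\<Sum>i. c i * R s i)"
      unfolding R_def by (auto intro!: summable_LIMSEQ suminf_S_rhs_M_weighted(1) wsummable_M c_bound)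
    show "(\<lambda>n. \<Sum>i<n. c i * (M t i - M 0 i)) \<longlonglongrightarrow> (\<Sum>i. c i * (M t i - M 0 i))"
      using \<open>t \<ge> 0\<close>
      by (intro summable_LIMSEQ summable_mult_weight[OF c_bound] wsummable_diff wsummable_M) auto
  qed
  moreover have "(\<Sum>i. c i * (M t i - M 0 i)) = (\<Sum>i. c i * M t i) - (\<Sum>i. c i * M 0 i)"
    using \<open>t \<ge> 0\<close> summable_mult_weight[OF c_bound wsummable_M]
    by (simp add: suminf_diff right_diff_distrib)
  ultimately show ?thesis
    unfolding R_def by simp
qed

lemma moment_deriv:
  assumes c_bound: "\<And>i. \<bar>c i\<bar> \<le> K * real (i + 1)" and "t \<ge> 0"
  shows "((\<lambda>s. \<Sum>i. c i * M s i) has_real_derivative (\<Sum>i. c i * S_rhs_M k r (x t) (M t) i))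
           (at t within {0..})"
proof -
  define G where "G s = (\<Sum>i. c i * S_rhs_M k r (x s) (M s) i)" for s
  have "continuous_on {0..} (\<lambda>s. c 0 * r + k * x s * (\<Sum>i. c (Suc i) * M s i)
      - (k * x s + 1) * (\<Sum>i. c i * M s i))"
    by (intro continuous_intros continuous_on_x continuous_on_moment[OF c_bound]
        continuous_on_moment[OF shifted_weight_bound[OF c_bound]])
  then have "continuous_on {0..} G"
    by (rule continuous_on_cong[THEN iffD1, rotated 2])
      (auto simp: G_def suminf_S_rhs_M_weighted(2)[OF wsummable_M c_bound])
  then have "((\<lambda>s. integral {0..s} G) has_real_derivative G t) (at t within {0..t + 1})"
    using \<open>t \<ge> 0\<close> by (intro integral_has_real_derivative continuous_on_subset[OF \<open>continuous_on {0..} G\<close>]) auto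
  then have "((\<lambda>s. (\<Sum>i. c i * M 0 i) + integral {0..s} G) has_real_derivative 0 + G t)
      (at t within {0..t + 1})"
    by (rule DERIV_add[OF DERIV_const])
  then have "((\<lambda>s. \<Sum>i. c i * M s i) has_real_derivative 0 + G t) (at t within {0..t + 1})"
  proof (rule has_field_derivative_transform_within[OF _ zero_less_one])
    show "t \<in> {0..t + 1}"
      using \<open>t \<ge> 0\<close> by simp
    show "(\<Sum>i. c i * M 0 i) + integral {0..s} G = (\<Sum>i. c i * M s i)" if "s \<in> {0..t + 1}" for s
      using integral_unique[OF moment_increment_has_integral[OF c_bound, of s]] that
      unfolding G_def by simp
  qed
  moreover have "at t within {0..t + 1} = at t within {0..}"
    by (rule at_within_nhd[of _ "{t - 1<..<t + 1}"]) auto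
  ultimately show ?thesis
    unfolding G_def by simp
qed

lemma reduce_deriv:
  assumes "N \<ge> 1" "t \<ge> 0" "j \<in> {1..N + 5}"
  shows "((\<lambda>s. reduce N (x s) (M s) j) has_real_derivative F_fin N k r \<alpha> (reduce N (x t) (M t)) j)
           (at t within {0..})"
proof -
  have moment_case: "((\<lambda>s. reduce N (x s) (M s) j) has_real_derivative F_fin N k r \<alpha> (reduce N (x t) (M t)) j)
      (at t within {0..})"
    if "\<And>\<xi> m. reduce N \<xi> m j = (\<Sum>i. c i * m i)" "\<And>i. \<bar>c i\<bar> \<le> 1 * real (i + 1)"
      and "(\<Sum>i. c i * S_rhs_M k r (x t) (M t) i) = F_fin N k r \<alpha> (reduce N (x t) (M t)) j" for c
    using moment_deriv[OF that(2) \<open>t \<ge> 0\<close>] unfolding that(1,3) .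
  consider "j = 1" | "j = 2" | "j = 3" | "j = 4" | "5 \<le> j" "j \<le> N + 5"
    using assms(3) by force
  then show ?thesis
  proof cases
    case 1
    then show ?thesis
      using x_deriv[OF \<open>t \<ge> 0\<close>] by (simp add: reduce_def S_rhs_x_def F_fin_def algebra_simps)
  next
    case 2
    show ?thesis
      using 2 suminf_S_rhs_M_reduce(1)[OF assms(1) wsummable_M[OF assms(2)]]
      by (intro moment_case[where c = "\<lambda>_. 1"]) (simp_all add: reduce_as_moments)
  next
    case 3
    show ?thesis
      using 3 suminf_S_rhs_M_reduce(2)[OF assms(1) wsummable_M[OF assms(2)]]
      by (intro moment_case[where c = "\<lambda>i. if N + 1 \<le> i then real i else 0"]) (simp_all add: reduce_as_moments)
  next
    case 4
    show ?thesis
      using 4 suminf_S_rhs_M_reduce(3)[OF assms(1) wsummable_M[OF assms(2)]]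
      by (intro moment_case[where c = "\<lambda>i. if N \<le> i then 1 else 0"]) (simp_all add: reduce_as_moments)
  next
    case 5
    have "(\<lambda>s. reduce N (x s) (M s) j) = (\<lambda>s. M s (j - 5))"
      using 5 by (simp add: reduce_as_moments)
    moreover have "S_rhs_M k r (x t) (M t) (j - 5) = F_fin N k r \<alpha> (reduce N (x t) (M t)) j"
      using 5 by (cases "j = 5") (auto simp: S_rhs_M_def F_fin_def reduce_def algebra_simps)
    ultimately show ?thesis
      using M_deriv[OF \<open>t \<ge> 0\<close>, of "j - 5"] by simp
  qed
qed

lemma F_solution_reduce_shift:
  assumes "N \<ge> 1" "T \<ge> 0"
  shows "F_solution N k r \<alpha> (\<lambda>s. reduce N (x (T + s)) (M (T + s)))"
  unfolding F_solution_def
proof (intro allI impI ballI)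
  fix t :: real and j assume "t \<ge> 0" "j \<in> {1..N + 5}"
  have "((\<lambda>s. reduce N (x s) (M s) j) has_real_derivative F_fin N k r \<alpha> (reduce N (x (T + t)) (M (T + t))) j)
      (at (T + t) within (\<lambda>s. T + s) ` {0..})"
    using assms \<open>t \<ge> 0\<close> \<open>j \<in> {1..N + 5}\<close> by (intro DERIV_subset[OF reduce_deriv]) auto
  moreover have "((\<lambda>s. T + s) has_real_derivative 1) (at t within {0..})"
    by (auto intro!: derivative_eq_intros)
  ultimately have "((\<lambda>s. reduce N (x s) (M s) j) \<circ> (\<lambda>s. T + s) has_real_derivative
      F_fin N k r \<alpha> (reduce N (x (T + t)) (M (T + t))) j * 1) (at t within {0..})"
    by (rule DERIV_image_chain)
  then
  show "((\<lambda>s. reduce N (x (T + s)) (M (T + s)) j) has_real_derivative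
      F_fin N k r \<alpha> (reduce N (x (T + t)) (M (T + t))) j) (at t within {0..})"
    by (simp add: o_def)
qed

lemma stable_reduction_decay:
  assumes "N \<ge> 1" "F_loc_exp_stable N k r \<alpha> (reduce N xe Me)" "wsummable Me"
  shows "\<exists>\<delta>>0. \<exists>\<gamma>>0. \<exists>C. \<forall>T t. 0 \<le> T \<longrightarrow> T \<le> t \<longrightarrow>
    Xnorm (x T - xe) (\<lambda>i. M T i - Me i) < \<delta> \<longrightarrow> \<bar>x t - xe\<bar> \<le> C * exp (- \<gamma> * (t - T))"
proof -
  define Ue where "Ue = reduce N xe Me"
  obtain \<delta> C \<gamma> where "\<delta> > 0" "C > 0" "\<gamma> > 0" and stable: "\<And>U0 U. fin_dist N U0 Ue < \<delta> \<Longrightarrow>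
      U 0 = U0 \<and> F_solution N k r \<alpha> U \<Longrightarrow> \<forall>t\<ge>0. fin_dist N (U t) Ue \<le> C * exp (- \<gamma> * t) * fin_dist N U0 Ue"
    using assms(2) unfolding F_loc_exp_stable_def Ue_def by blast
  have "\<bar>x t - xe\<bar> \<le> C * \<delta> * exp (- \<gamma> * (t - T))"
    if "0 \<le> T" "T \<le> t" and close: "Xnorm (x T - xe) (\<lambda>i. M T i - Me i) < \<delta> / real (N + 5)" for T t
  proof -
    define U where "U s = reduce N (x (T + s)) (M (T + s))" for s
    have "fin_dist N (U 0) Ue \<le> real (N + 5) * Xnorm (x T - xe) (\<lambda>i. M T i - Me i)"
      unfolding U_def Ue_def using fin_dist_reduce_le[OF wsummable_M[OF \<open>0 \<le> T\<close>] assms(3)] by simp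
    also have "\<dots> < \<delta>"
      using close by (simp add: field_simps)
    finally have "fin_dist N (U 0) Ue < \<delta>" .
    moreover have "F_solution N k r \<alpha> U"
      unfolding U_def using assms(1) \<open>0 \<le> T\<close> by (rule F_solution_reduce_shift)
    ultimately have "fin_dist N (U (t - T)) Ue \<le> C * exp (- \<gamma> * (t - T)) * fin_dist N (U 0) Ue"
      using stable[of "U 0" U] \<open>T \<le> t\<close> by simp
    also have "\<dots> \<le> C * exp (- \<gamma> * (t - T)) * \<delta>"
      using \<open>fin_dist N (U 0) Ue < \<delta>\<close> \<open>C > 0\<close> by (intro mult_left_mono) auto
    moreover have "\<bar>x t - xe\<bar> \<le> fin_dist N (U (t - T)) Ue"
      unfolding U_def Ue_def using abs_diff_le_fin_dist_reduce by simp
    ultimately show ?thesis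
      by (simp add: algebra_simps)
  qed
  moreover have "\<delta> / real (N + 5) > 0"
    using \<open>\<delta> > 0\<close> by simp
  ultimately show ?thesis
    using \<open>\<gamma> > 0\<close> by blast
qed

lemma x_exp_decay:
  assumes "N \<ge> 1" "F_loc_exp_stable N k r \<alpha> (reduce N xe Me)" "wsummable Me"
    and converges: "((\<lambda>t. Xnorm (x t - xe) (\<lambda>i. M t i - Me i)) \<longlongrightarrow> 0) at_top"
  obtains C \<gamma> where "\<gamma> > 0" "\<And>t. t \<ge> 0 \<Longrightarrow> \<bar>x t - xe\<bar> \<le> C * exp (- \<gamma> * t)"
proof -
  obtain \<delta> \<gamma> C where "\<delta> > 0" "\<gamma> > 0" and decay: "\<And>T t. 0 \<le> T \<Longrightarrow> T \<le> t \<Longrightarrow>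
      Xnorm (x T - xe) (\<lambda>i. M T i - Me i) < \<delta> \<Longrightarrow> \<bar>x t - xe\<bar> \<le> C * exp (- \<gamma> * (t - T))"
    using stable_reduction_decay[OF assms(1-3)] by blast
  obtain T0 where T0: "\<And>t. t \<ge> T0 \<Longrightarrow> Xnorm (x t - xe) (\<lambda>i. M t i - Me i) < \<delta>"
    using order_tendstoD(2)[OF converges \<open>\<delta> > 0\<close>] unfolding eventually_at_top_linorder by blast
  define T where "T = max T0 0"
  have "T \<ge> 0" and close: "Xnorm (x T - xe) (\<lambda>i. M T i - Me i) < \<delta>"
    using T0[of T] by (auto simp: T_def)
  have late: "\<bar>x t - xe\<bar> \<le> (C * exp (\<gamma> * T)) * exp (- \<gamma> * t)" if "t \<ge> T" for t
  proof -
    have "\<bar>x t - xe\<bar> \<le> C * exp (- \<gamma> * (t - T))"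
      using decay[OF \<open>T \<ge> 0\<close> that close] .
    also have "\<dots> = (C * exp (\<gamma> * T)) * exp (- \<gamma> * t)"
      by (simp add: algebra_simps flip: exp_add)
    finally show ?thesis .
  qed
  have "continuous_on {0..T} (\<lambda>t. x t - xe)"
    by (intro continuous_intros continuous_on_subset[OF continuous_on_x]) auto
  then obtain C' where "\<And>t. t \<ge> 0 \<Longrightarrow> \<bar>x t - xe\<bar> \<le> C' * exp (- \<gamma> * t)"
    using exp_bound_extend_to_initial_segment[of T _ \<gamma>] \<open>\<gamma> > 0\<close> late by fastforce
  with \<open>\<gamma> > 0\<close> show ?thesis
    by (rule that)
qed

lemma deviation_forced_chain:
  assumes "k > 0" "S_equilibrium N k r \<alpha> xe Me" "0 < \<gamma>" "\<gamma> < 1"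
    and "\<And>t. t \<ge> 0 \<Longrightarrow> \<bar>x t - xe\<bar> \<le> C * exp (- \<gamma> * t)"
  shows "forced_chain (\<lambda>s. k * x s) (k * xe) (\<lambda>i. (if i = 0 then 0 else Me (i - 1)) - Me i)
    (\<lambda>i s. M s i - Me i) (k * C) \<gamma>"
proof
  have "wsummable Me" and equilibrium: "\<And>i. S_rhs_M k r xe Me i = 0"
    using assms(2) unfolding S_equilibrium_def inXplus_def inX_iff_wsummable by auto
  show "continuous_on {0..} (\<lambda>s. k * x s)"
    by (intro continuous_intros continuous_on_x)
  show "s \<ge> 0 \<Longrightarrow> k * x s \<ge> 0" for s
    using \<open>k > 0\<close> x_nonneg by simp
  show "s \<ge> 0 \<Longrightarrow> \<bar>k * x s - k * xe\<bar> \<le> k * C * exp (- \<gamma> * s)" for s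
    using assms(5) \<open>k > 0\<close> by (simp add: abs_mult flip: right_diff_distrib)
  show "wsummable (\<lambda>i. (if i = 0 then 0 else Me (i - 1)) - Me i)"
    by (intro wsummable_diff wsummable_shift \<open>wsummable Me\<close>)
  show "wsummable (\<lambda>i. M 0 i - Me i)"
    by (intro wsummable_diff wsummable_M \<open>wsummable Me\<close>) simp
  show "((\<lambda>s. M s i - Me i) has_real_derivative
      k * x s * (if i = 0 then 0 else M s (i - 1) - Me (i - 1)) - (k * x s + 1) * (M s i - Me i)
      + (k * x s - k * xe) * ((if i = 0 then 0 else Me (i - 1)) - Me i)) (at s within {0..})"
    if "s \<ge> 0" for i s
  proof -
    have "((\<lambda>s. M s i - Me i) has_real_derivative S_rhs_M k r (x s) (M s) i - S_rhs_M k r xe Me i)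
        (at s within {0..})"
      using DERIV_diff[OF M_deriv[OF that, of i] DERIV_const[of "Me i"]] equilibrium[of i] by simp
    moreover have "S_rhs_M k r (x s) (M s) i - S_rhs_M k r xe Me i
        = k * x s * (if i = 0 then 0 else M s (i - 1) - Me (i - 1)) - (k * x s + 1) * (M s i - Me i)
          + (k * x s - k * xe) * ((if i = 0 then 0 else Me (i - 1)) - Me i)"
      by (simp add: S_rhs_M_def algebra_simps)
    ultimately show ?thesis
      by simp
  qed
qed (use assms(3,4) in auto)

lemma Xnorm_exp_decay:
  assumes "k > 0" "S_equilibrium N k r \<alpha> xe Me" "\<gamma> > 0"
    and x_decay: "\<And>t. t \<ge> 0 \<Longrightarrow> \<bar>x t - xe\<bar> \<le> C * exp (- \<gamma> * t)"
  obtains C' \<gamma>' where "C' > 0" "\<gamma>' > 0"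
    "\<And>t. t \<ge> 0 \<Longrightarrow> Xnorm (x t - xe) (\<lambda>i. M t i - Me i) \<le> C' * exp (- \<gamma>' * t)"
proof -
  define \<gamma>' where "\<gamma>' = min \<gamma> (1 / 2)"
  have "\<gamma>' > 0" "\<gamma>' < 1"
    using \<open>\<gamma> > 0\<close> by (auto simp: \<gamma>'_def)
  have "C \<ge> 0"
    using x_decay[of 0] by simp
  then have x_decay': "\<bar>x t - xe\<bar> \<le> C * exp (- \<gamma>' * t)" if "t \<ge> 0" for t
    using x_decay[OF that] that mult_left_mono[of "exp (- \<gamma> * t)" "exp (- \<gamma>' * t)" C]
    by (simp add: \<gamma>'_def mult_right_mono)
  interpret chain: forced_chain "\<lambda>s. k * x s" "k * xe" "\<lambda>i. (if i = 0 then 0 else Me (i - 1)) - Me i"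
      "\<lambda>i s. M s i - Me i" "k * C" \<gamma>'
    using deviation_forced_chain[OF assms(1,2) \<open>\<gamma>' > 0\<close> \<open>\<gamma>' < 1\<close> x_decay'] .
  obtain C2 where C2: "\<And>t n. t \<ge> 0 \<Longrightarrow> (\<Sum>i<n. real (i + 1) * \<bar>M t i - Me i\<bar>) \<le> C2 * exp (- \<gamma>' * t)"
    using chain.weighted_sum_exp_decay by blast
  have "wsummable Me"
    using assms(2) by (simp add: S_equilibrium_def inXplus_def inX_iff_wsummable)
  have "Xnorm (x t - xe) (\<lambda>i. M t i - Me i) \<le> (C + \<bar>C2\<bar> + 1) * exp (- \<gamma>' * t)" if "t \<ge> 0" for t
  proof -
    have "wnorm (\<lambda>i. M t i - Me i) \<le> C2 * exp (- \<gamma>' * t)"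
      unfolding wnorm_def using wsummable_diff[OF wsummable_M[OF that] \<open>wsummable Me\<close>] C2[OF that]
      by (intro suminf_le_const) (auto simp: wsummable_def)
    then show ?thesis
      using x_decay'[OF that] abs_ge_self[of C2] mult_right_mono[of C2 "\<bar>C2\<bar> + 1" "exp (- \<gamma>' * t)"]
      by (simp add: Xnorm_eq algebra_simps)
  qed
  moreover have "C + \<bar>C2\<bar> + 1 > 0"
    using \<open>C \<ge> 0\<close> by simp
  ultimately show ?thesis
    using that \<open>\<gamma>' > 0\<close> by blast
qed

end

theorem theorem4p2:
  fixes N :: nat and k r \<alpha> xe :: real and Me :: "nat \<Rightarrow> real"
  assumes "N \<ge> 1" and "k > 0" and "r > 0" and "\<alpha> > 0"
    and "\<alpha> / r < mustar N"
    and "S_equilibrium N k r \<alpha> xe Me"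
    and "F_loc_exp_stable N k r \<alpha> (reduce N xe Me)"
  shows "\<forall>(x :: real \<Rightarrow> real) (M :: real \<Rightarrow> nat \<Rightarrow> real).
           S_solution N k r \<alpha> x M \<and>
           ((\<lambda>t. Xnorm (x t - xe) (\<lambda>i. M t i - Me i)) \<longlongrightarrow> 0) at_top \<longrightarrow>
           (\<exists>C>0. \<exists>\<gamma>>0. \<forall>t\<ge>0. Xnorm (x t - xe) (\<lambda>i. M t i - Me i) \<le> C * exp (- \<gamma> * t))"
proof (intro allI impI, elim conjE)
  fix x :: "real \<Rightarrow> real" and M :: "real \<Rightarrow> nat \<Rightarrow> real"
  assume "S_solution N k r \<alpha> x M"
    and converges: "((\<lambda>t. Xnorm (x t - xe) (\<lambda>i. M t i - Me i)) \<longlongrightarrow> 0) at_top"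
  then interpret S_trajectory N k r \<alpha> x M
    by unfold_locales
  have "wsummable Me"
    using assms(6) by (simp add: S_equilibrium_def inXplus_def inX_iff_wsummable)
  obtain C \<gamma> where "\<gamma> > 0" "\<And>t. t \<ge> 0 \<Longrightarrow> \<bar>x t - xe\<bar> \<le> C * exp (- \<gamma> * t)"
    using x_exp_decay[OF assms(1,7) \<open>wsummable Me\<close> converges] by blast
  then obtain C' \<gamma>' where "C' > 0" "\<gamma>' > 0"
    "\<And>t. t \<ge> 0 \<Longrightarrow> Xnorm (x t - xe) (\<lambda>i. M t i - Me i) \<le> C' * exp (- \<gamma>' * t)"
    using Xnorm_exp_decay[OF assms(2,6)] by blast
  then show "\<exists>C>0. \<exists>\<gamma>>0. \<forall>t\<ge>0. Xnorm (x t - xe) (\<lambda>i. M t i - Me i) \<le> C * exp (- \<gamma> * t)"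
    by blast
qed

end
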